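(* Let $V$ be a finite nonempty set of voters, $A$ a finite set of alternatives, and $F:\mathcal{P}(V,A)\to S_2(A)$ a consular election rule satisfying SPP and SPO. Then for every linear order $L$ on $A$ (in particular for every voter's preference order) there is a unique favourite committee of $L$ in the range of $F$.
   Context: A profile assigns to each voter $i\in V$ a linear order $P_i$ on $A$; $P_i'P_{-i}$ replaces voter $i$'s order by $P_i'$. $S_2(A)$ is the set of 2-element subsets of $A$; a consular election rule is a map $F:\mathcal{P}(V,A)\to S_2(A)$. SPO: for all $P$, $i$, $P_i'$, $\mathrm{best}(P_i,F(P))\succeq_i\mathrm{best}(P_i,F(P_i'P_{-i}))$; SPP: same with $\mathrm{worst}$, where $\mathrm{best}(P_i,W)$, $\mathrm{worst}(P_i,W)$ are the $P_i$-best and $P_i$-worst elements of $W$. For a linear order $L$ on $A$ and $X,Y\in S_2(A)$: $X\succeq^O Y$ iff the $L$-best element of $X$ is weakly $L$-above that of $Y$; $X\succeq^P Y$ iff the $L$-worst element of $X$ is weakly $L$-above that of $Y$. A favourite committee of $L$ in $\mathcal{X}\subseteq S_2(A)$ is an element of $\mathcal{X}$ maximal in $\mathcal{X}$ under both $\succeq^O$ and $\succeq^P$. *)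

theory Defs
  imports Main
begin

text \<open>Convention: a (weak) linear order L on A is a relation with linear_order_on A L;
  (x, y) \<in> L means x is weakly preferred to (weakly L-above) y.\<close>

definition profiles :: "'v set \<Rightarrow> 'a set \<Rightarrow> ('v \<Rightarrow> 'a rel) set" where
  "profiles V A = {P. (\<forall>i\<in>V. linear_order_on A (P i)) \<and> (\<forall>i. i \<notin> V \<longrightarrow> P i = {})}"

definition S2 :: "'a set \<Rightarrow> 'a set set" where
  "S2 A = {X. X \<subseteq> A \<and> card X = 2}"

definition best :: "'a rel \<Rightarrow> 'a set \<Rightarrow> 'a" where
  "best L W = (THE x. x \<in> W \<and> (\<forall>y\<in>W. (x, y) \<in> L))"

definition worst :: "'a rel \<Rightarrow> 'a set \<Rightarrow> 'a" where
  "worst L W = (THE x. x \<in> W \<and> (\<forall>y\<in>W. (y, x) \<in> L))"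

definition consular_rule :: "'v set \<Rightarrow> 'a set \<Rightarrow> (('v \<Rightarrow> 'a rel) \<Rightarrow> 'a set) \<Rightarrow> bool" where
  "consular_rule V A F = (\<forall>P\<in>profiles V A. F P \<in> S2 A)"

definition SPO :: "'v set \<Rightarrow> 'a set \<Rightarrow> (('v \<Rightarrow> 'a rel) \<Rightarrow> 'a set) \<Rightarrow> bool" where
  "SPO V A F = (\<forall>P\<in>profiles V A. \<forall>i\<in>V. \<forall>P'. linear_order_on A P' \<longrightarrow>
      (best (P i) (F P), best (P i) (F (P(i := P')))) \<in> P i)"

definition SPP :: "'v set \<Rightarrow> 'a set \<Rightarrow> (('v \<Rightarrow> 'a rel) \<Rightarrow> 'a set) \<Rightarrow> bool" where
  "SPP V A F = (\<forall>P\<in>profiles V A. \<forall>i\<in>V. \<forall>P'. linear_order_on A P' \<longrightarrow>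
      (worst (P i) (F P), worst (P i) (F (P(i := P')))) \<in> P i)"

definition geqO :: "'a rel \<Rightarrow> 'a set \<Rightarrow> 'a set \<Rightarrow> bool" where
  "geqO L X Y = ((best L X, best L Y) \<in> L)"

definition geqP :: "'a rel \<Rightarrow> 'a set \<Rightarrow> 'a set \<Rightarrow> bool" where
  "geqP L X Y = ((worst L X, worst L Y) \<in> L)"

definition favourite_committee :: "'a rel \<Rightarrow> 'a set set \<Rightarrow> 'a set \<Rightarrow> bool" where
  "favourite_committee L \<X> X = (X \<in> \<X> \<and>
     (\<forall>Y\<in>\<X>. geqO L Y X \<longrightarrow> geqO L X Y) \<and>
     (\<forall>Y\<in>\<X>. geqP L Y X \<longrightarrow> geqP L X Y))"

end

theory Submission
  imports Defs
begin

text \<open>Let \<open>U\<close> be the profile in which every voter reports \<open>L\<close>. Starting from an arbitrary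
  profile \<open>Q\<close>, switch the voters to \<open>L\<close> one at a time: by SPO (resp. SPP) the deviating voter,
  whose true order is now \<open>L\<close>, never sees the \<open>L\<close>-best (resp. \<open>L\<close>-worst) member of the
  committee go up. Hence \<open>F U\<close> is weakly \<open>L\<close>-above every committee in the range of \<open>F\<close> in
  both orders, so it is a favourite committee; and any favourite committee shares its best and
  worst member, which determines a two-element set.\<close>

definition strategyproof_wrt ::
    "('a rel \<Rightarrow> 'a set \<Rightarrow> 'a) \<Rightarrow> 'v set \<Rightarrow> 'a set \<Rightarrow> (('v \<Rightarrow> 'a rel) \<Rightarrow> 'a set) \<Rightarrow> bool" where
  "strategyproof_wrt g V A F = (\<forall>P\<in>profiles V A. \<forall>i\<in>V. \<forall>P'. linear_order_on A P' \<longrightarrow>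
      (g (P i) (F P), g (P i) (F (P(i := P')))) \<in> P i)"

lemma SPO_eq_strategyproof_wrt_best: "SPO V A F = strategyproof_wrt best V A F"
  unfolding SPO_def strategyproof_wrt_def ..

lemma SPP_eq_strategyproof_wrt_worst: "SPP V A F = strategyproof_wrt worst V A F"
  unfolding SPP_def strategyproof_wrt_def ..

lemma best_eqI:
  assumes "antisym L" "x \<in> W" "\<forall>y\<in>W. (x, y) \<in> L"
  shows "best L W = x"
  unfolding best_def using assms by (auto dest: antisymD)

lemma worst_eqI:
  assumes "antisym L" "x \<in> W" "\<forall>y\<in>W. (y, x) \<in> L"
  shows "worst L W = x"
  unfolding worst_def using assms by (auto dest: antisymD)

lemma S2_best_worst:
  assumes L: "linear_order_on A L" and X: "X \<in> S2 A"
  obtains x y where "X = {x, y}" "x \<noteq> y" "x \<in> A" "y \<in> A"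
    "best L X = x" "worst L X = y"
proof -
  from X obtain a b where ab: "X = {a, b}" "a \<noteq> b" "a \<in> A" "b \<in> A"
    unfolding S2_def by (auto simp: card_2_iff)
  have refl: "refl_on A L" and anti: "antisym L" and tot: "total_on A L"
    using L by (auto simp: linear_order_on_def partial_order_on_def preorder_on_def)
  have ordered: "best L {x, y} = x \<and> worst L {x, y} = y"
    if "x \<in> A" "y \<in> A" "(x, y) \<in> L" for x y
    using that refl anti by (auto intro!: best_eqI worst_eqI dest: refl_onD)
  from tot ab have "(a, b) \<in> L \<or> (b, a) \<in> L"
    by (auto simp: total_on_def)
  then show ?thesis
  proof
    assume "(a, b) \<in> L"
    then show ?thesis using ordered[of a b] ab that by blast
  next
    assume "(b, a) \<in> L"
    then show ?thesis using ordered[of b a] ab that[of b a] by (simp add: insert_commute)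
  qed
qed

lemma S2_eq_if_best_worst_eq:
  assumes "linear_order_on A L" "X \<in> S2 A" "Y \<in> S2 A"
    and "best L X = best L Y" "worst L X = worst L Y"
  shows "X = Y"
  by (metis S2_best_worst[OF assms(1,2)] S2_best_worst[OF assms(1,3)] assms(4,5))

lemma S2_best_in: "linear_order_on A L \<Longrightarrow> X \<in> S2 A \<Longrightarrow> best L X \<in> A"
  by (metis S2_best_worst)

lemma S2_worst_in: "linear_order_on A L \<Longrightarrow> X \<in> S2 A \<Longrightarrow> worst L X \<in> A"
  by (metis S2_best_worst)

text \<open>Voters outside \<open>V\<close> are required to report the empty relation, hence the guard.\<close>
definition unanimous_profile :: "'v set \<Rightarrow> 'a rel \<Rightarrow> 'v \<Rightarrow> 'a rel" where
  "unanimous_profile V L = (\<lambda>i. if i \<in> V then L else {})"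

lemma unanimous_profile_in_profiles:
  "linear_order_on A L \<Longrightarrow> unanimous_profile V L \<in> profiles V A"
  unfolding unanimous_profile_def profiles_def by auto

lemma strategyproof_wrt_switch_to_truth:
  assumes sp: "strategyproof_wrt g V A F" and L: "linear_order_on A L"
    and Q: "Q \<in> profiles V A" and gQ: "g L (F Q) \<in> A"
    and S: "finite S" "S \<subseteq> V"
  shows "(g L (F (\<lambda>i. if i \<in> S then L else Q i)), g L (F Q)) \<in> L"
  using S
proof (induction S rule: finite_induct)
  case empty
  from L gQ show ?case
    by (auto simp: linear_order_on_def partial_order_on_def preorder_on_def dest: refl_onD)
next
  case (insert k S)
  define PS where "PS = (\<lambda>i. if i \<in> S then L else Q i)"
  define PK where "PK = (\<lambda>i. if i \<in> insert k S then L else Q i)"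
  have k: "k \<in> V" using insert.prems by auto
  have "PK \<in> profiles V A"
    using Q L insert.prems unfolding profiles_def PK_def by auto
  moreover have "linear_order_on A (Q k)" using Q k unfolding profiles_def by auto
  ultimately have "(g (PK k) (F PK), g (PK k) (F (PK(k := Q k)))) \<in> PK k"
    using sp k unfolding strategyproof_wrt_def by blast
  moreover have "PK k = L" unfolding PK_def by simp
  moreover have "PK(k := Q k) = PS"
    unfolding PK_def PS_def using insert.hyps by (intro ext) auto
  ultimately have "(g L (F PK), g L (F PS)) \<in> L" by simp
  moreover have "(g L (F PS), g L (F Q)) \<in> L"
    using insert unfolding PS_def by auto
  moreover have "trans L"
    using L by (auto simp: linear_order_on_def partial_order_on_def preorder_on_def)
  ultimately show ?case unfolding PK_def by (meson transD)
qed

lemma strategyproof_wrt_unanimous_dominates: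
  assumes "strategyproof_wrt g V A F" "linear_order_on A L" "finite V"
    and Q: "Q \<in> profiles V A" and "g L (F Q) \<in> A"
  shows "(g L (F (unanimous_profile V L)), g L (F Q)) \<in> L"
proof -
  have "(\<lambda>i. if i \<in> V then L else Q i) = unanimous_profile V L"
    using Q unfolding unanimous_profile_def profiles_def by (intro ext) auto
  then show ?thesis
    using strategyproof_wrt_switch_to_truth[OF assms(1,2) Q assms(5,3) order_refl] by simp
qed

lemma favourite_committee_iff_eq_dominant:
  assumes L: "linear_order_on A L" and \<X>: "\<X> \<subseteq> S2 A" and Z: "Z \<in> \<X>"
    and dom: "\<forall>Y\<in>\<X>. geqO L Z Y \<and> geqP L Z Y"
  shows "favourite_committee L \<X> X \<longleftrightarrow> X = Z"
proof
  assume X: "favourite_committee L \<X> X"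
  then have "X \<in> \<X>" unfolding favourite_committee_def by blast
  moreover have "antisym L" using L by (simp add: linear_order_on_def partial_order_on_def)
  ultimately have "best L X = best L Z" "worst L X = worst L Z"
    using X Z dom unfolding favourite_committee_def geqO_def geqP_def
    by (meson antisymD)+
  then show "X = Z" using S2_eq_if_best_worst_eq[OF L] \<X> \<open>X \<in> \<X>\<close> Z by blast
next
  assume "X = Z"
  then show "favourite_committee L \<X> X"
    using Z dom unfolding favourite_committee_def by blast
qed

theorem corollary36:
  fixes V :: "'v set" and A :: "'a set" and F :: "('v \<Rightarrow> 'a rel) \<Rightarrow> 'a set"
  assumes "finite V" and "V \<noteq> {}" and "finite A"
    and "consular_rule V A F" and "SPP V A F" and "SPO V A F"
  shows "\<forall>L. linear_order_on A L \<longrightarrow>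
           (\<exists>!X. favourite_committee L (F ` profiles V A) X)"
proof (intro allI impI)
  fix L assume L: "linear_order_on A L"
  let ?U = "unanimous_profile V L"
  have range: "F ` profiles V A \<subseteq> S2 A"
    using assms(4) unfolding consular_rule_def by blast
  have "geqO L (F ?U) (F Q) \<and> geqP L (F ?U) (F Q)" if Q: "Q \<in> profiles V A" for Q
    using strategyproof_wrt_unanimous_dominates[OF _ L assms(1) Q]
      assms(5,6) range Q S2_best_in[OF L] S2_worst_in[OF L]
    unfolding geqO_def geqP_def SPO_eq_strategyproof_wrt_best SPP_eq_strategyproof_wrt_worst
    by blast
  then have "favourite_committee L (F ` profiles V A) X \<longleftrightarrow> X = F ?U" for X
    using favourite_committee_iff_eq_dominant[OF L range]
      unanimous_profile_in_profiles[OF L] by blast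
  then show "\<exists>!X. favourite_committee L (F ` profiles V A) X" by blast
qed

end
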